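(* Let $n\ge1$, $s\in(0,1)$, $p\in[1,\infty)$, $R>0$. Let $F:\mathbb{R}\times(\mathbb{R}^n\setminus\{0\})\to[0,\infty)$ satisfy $F(t,x)=F(-t,x)=F(-t,-x)$ and, for some $c_*,c^*>0$, $c_*\big(\frac{|t|^p}{|x|^{n+sp}}-\frac{1}{|x|^{n+sp-p}}\big)\le F(t,x)\le c^*\frac{|t|^p}{|x|^{n+sp}}$; let $W:\mathbb{R}\to[0,\infty)$ with $W\in L^\infty(\mathbb{R})\cap C^1(\mathbb{R})$. Let $\varphi\in\mathcal{X}_R$ and $u\in\mathcal{W}^{s,p}_{R,\varphi}$. Then there exists $C>0$ depending on $n,s,p,R,\|W\|_{L^\infty(\mathbb{R})},\|\varphi\|_{L^\infty(\mathbb{R}^n)}$ such that $$\mathcal{E}(u,B_R)\le C\big(\|u\|^p_{W^{s,p}(B_R)}+[u]^p_{R,\varphi}+1\big),$$ and moreover $\mathcal{K}_R(u)=u(B_R,B_R)+2\,u(B_R,\mathcal{C}B_R)$.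
   Context: $B_R$ is the open ball of radius $R$ centered at $0$ and $\mathcal{C}B_R=\mathbb{R}^n\setminus B_R$. $\mathcal{K}_R(u)=\iint_{\mathbb{R}^{2n}\setminus(\mathcal{C}B_R)^2}F(u(x)-u(y),x-y)\,dx\,dy$ and $\mathcal{E}(u,B_R)=\mathcal{K}_R(u)+\int_{B_R}W(u)\,dx$. For sets $A,B\subset\mathbb{R}^n$, $u(A,B)=\int_A\int_BF(u(x)-u(y),x-y)\,dx\,dy$. The Gagliardo seminorm is $[u]_{W^{s,p}(\Omega)}=\big(\int_\Omega\int_\Omega\frac{|u(x)-u(y)|^p}{|x-y|^{n+sp}}dx\,dy\big)^{1/p}$ and $\|u\|_{W^{s,p}(\Omega)}=(\|u\|^p_{L^p(\Omega)}+[u]^p_{W^{s,p}(\Omega)})^{1/p}$. $\mathcal{X}_R=\{\varphi:\mathbb{R}^n\to\mathbb{R}:\varphi\in L^\infty(\mathbb{R}^n)\cap W^{s,p}(B_{2R})\}$. $[u]_{R,\varphi}=\big(\int_{B_R}\int_{B_{2R}\setminus B_R}\frac{|u(x)-\varphi(y)|^p}{|x-y|^{n+sp}}dy\,dx\big)^{1/p}$. $\mathcal{W}^{s,p}_{R,\varphi}=\{u:\mathbb{R}^n\to\mathbb{R}: u|_{B_R}\in W^{s,p}(B_R),\ [u]_{R,\varphi}<\infty,\ u=\varphi \text{ on }\mathcal{C}B_R\}$. *)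

theory Defs
  imports "HOL-Analysis.Analysis" "HOL-Probability.Essential_Supremum"
begin

(* Ambient space R^n is an arbitrary euclidean_space 'a, n = DIM('a); measure = Lebesgue. *)

definition Linfty_norm :: "('b::euclidean_space \<Rightarrow> real) \<Rightarrow> ereal" where
  "Linfty_norm f = esssup lebesgue (\<lambda>x. ereal \<bar>f x\<bar>)"

definition in_Linfty :: "('b::euclidean_space \<Rightarrow> real) \<Rightarrow> bool" where
  "in_Linfty f \<longleftrightarrow> f \<in> borel_measurable lebesgue \<and> Linfty_norm f < \<infinity>"

definition Lp_pow :: "real \<Rightarrow> ('a::euclidean_space \<Rightarrow> real) \<Rightarrow> 'a set \<Rightarrow> ennreal" where
  "Lp_pow p u \<Omega> = (\<integral>\<^sup>+ x \<in> \<Omega>. ennreal (\<bar>u x\<bar> powr p) \<partial>lebesgue)"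

definition gagliardo_pow :: "real \<Rightarrow> real \<Rightarrow> ('a::euclidean_space \<Rightarrow> real) \<Rightarrow> 'a set \<Rightarrow> ennreal" where
  "gagliardo_pow s p u \<Omega> = (\<integral>\<^sup>+ x \<in> \<Omega>. (\<integral>\<^sup>+ y \<in> \<Omega>.
      ennreal (\<bar>u x - u y\<bar> powr p / norm (x - y) powr (real DIM('a) + s * p)) \<partial>lebesgue) \<partial>lebesgue)"

definition Wsp_norm_pow :: "real \<Rightarrow> real \<Rightarrow> ('a::euclidean_space \<Rightarrow> real) \<Rightarrow> 'a set \<Rightarrow> ennreal" where
  "Wsp_norm_pow s p u \<Omega> = Lp_pow p u \<Omega> + gagliardo_pow s p u \<Omega>"

definition in_Wsp :: "real \<Rightarrow> real \<Rightarrow> ('a::euclidean_space \<Rightarrow> real) \<Rightarrow> 'a set \<Rightarrow> bool" where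
  "in_Wsp s p u \<Omega> \<longleftrightarrow> set_borel_measurable lebesgue \<Omega> u \<and> Wsp_norm_pow s p u \<Omega> < \<infinity>"

definition bdry_pow :: "real \<Rightarrow> real \<Rightarrow> real \<Rightarrow> ('a::euclidean_space \<Rightarrow> real) \<Rightarrow> ('a \<Rightarrow> real) \<Rightarrow> ennreal" where
  "bdry_pow s p R u \<phi> = (\<integral>\<^sup>+ x \<in> ball 0 R. (\<integral>\<^sup>+ y \<in> ball 0 (2*R) - ball 0 R.
      ennreal (\<bar>u x - \<phi> y\<bar> powr p / norm (x - y) powr (real DIM('a) + s * p)) \<partial>lebesgue) \<partial>lebesgue)"

definition X_R :: "real \<Rightarrow> real \<Rightarrow> real \<Rightarrow> ('a::euclidean_space \<Rightarrow> real) set" where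
  "X_R s p R = {\<phi>. in_Linfty \<phi> \<and> in_Wsp s p \<phi> (ball 0 (2*R))}"

definition W_R_phi :: "real \<Rightarrow> real \<Rightarrow> real \<Rightarrow> ('a::euclidean_space \<Rightarrow> real) \<Rightarrow> ('a \<Rightarrow> real) set" where
  "W_R_phi s p R \<phi> = {u. in_Wsp s p u (ball 0 R) \<and> bdry_pow s p R u \<phi> < \<infinity>
       \<and> (\<forall>x. x \<notin> ball 0 R \<longrightarrow> u x = \<phi> x)}"

definition uAB :: "(real \<Rightarrow> 'a::euclidean_space \<Rightarrow> real) \<Rightarrow> ('a \<Rightarrow> real) \<Rightarrow> 'a set \<Rightarrow> 'a set \<Rightarrow> ennreal" where
  "uAB F u A B = (\<integral>\<^sup>+ x \<in> A. (\<integral>\<^sup>+ y \<in> B. ennreal (F (u x - u y) (x - y)) \<partial>lebesgue) \<partial>lebesgue)"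

definition K_R :: "(real \<Rightarrow> 'a::euclidean_space \<Rightarrow> real) \<Rightarrow> real \<Rightarrow> ('a \<Rightarrow> real) \<Rightarrow> ennreal" where
  "K_R F R u = (\<integral>\<^sup>+ x. (\<integral>\<^sup>+ y. indicator (UNIV - (- ball 0 R) \<times> (- ball 0 R)) (x, y)
      * ennreal (F (u x - u y) (x - y)) \<partial>lebesgue) \<partial>lebesgue)"

definition energy :: "(real \<Rightarrow> 'a::euclidean_space \<Rightarrow> real) \<Rightarrow> (real \<Rightarrow> real) \<Rightarrow> real \<Rightarrow> ('a \<Rightarrow> real) \<Rightarrow> ennreal" where
  "energy F W R u = K_R F R u + (\<integral>\<^sup>+ x \<in> ball 0 R. ennreal (W (u x)) \<partial>lebesgue)"

definition admissible_F :: "real \<Rightarrow> real \<Rightarrow> real \<Rightarrow> (real \<Rightarrow> 'a::euclidean_space \<Rightarrow> real) \<Rightarrow> bool" where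
  "admissible_F s p cS F \<longleftrightarrow>
     (\<lambda>(t, x). F t x) \<in> borel_measurable borel \<and>
     (\<exists>cs>0. \<forall>t x. x \<noteq> 0 \<longrightarrow>
        0 \<le> F t x \<and> F t x = F (-t) x \<and> F t x = F (-t) (-x) \<and>
        cs * (\<bar>t\<bar> powr p / norm x powr (real DIM('a) + s * p)
              - 1 / norm x powr (real DIM('a) + s * p - p)) \<le> F t x \<and>
        F t x \<le> cS * \<bar>t\<bar> powr p / norm x powr (real DIM('a) + s * p))"

definition admissible_W :: "(real \<Rightarrow> real) \<Rightarrow> bool" where
  "admissible_W W \<longleftrightarrow> (\<forall>t. 0 \<le> W t) \<and> in_Linfty W \<and> W C1_differentiable_on UNIV"

end

theory Submission
  imports Defs
begin

(* The symmetry F(t,x) = F(-t,-x) makes the two mixed interactions of B_R with its complement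
   equal, which gives the splitting of K_R.  The upper bound on F controls u(B_R,B_R) by the
   Gagliardo seminorm of u on B_R.  In u(B_R, CB_R) we have u(y) = phi(y); the part of the
   complement inside B_2R is exactly [u]_{R,phi}, while outside B_2R one has |x - y| >= |y|/2
   and |u(x) - phi(y)|^p <= 2^p (|u(x)|^p + |phi|_oo^p), and |y|^(-n-sp) is integrable there
   (sum over dyadic shells), which leaves the L^p norm of u on B_R plus a constant.  Finally W
   is continuous, so its essential bound holds pointwise and the potential term is at most
   |W|_oo |B_R|. *)

lemma sigma_finite_lebesgue: "sigma_finite_measure (lebesgue :: 'a::euclidean_space measure)"
proof
  show "\<exists>A::'a set set. countable A \<and> A \<subseteq> sets lebesgue \<and> \<Union>A = space lebesgue
          \<and> (\<forall>a\<in>A. emeasure lebesgue a \<noteq> \<infinity>)"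
  proof (intro exI[of _ "range (\<lambda>n::nat. ball (0::'a) (real n))"] conjI)
    show "\<Union>(range (\<lambda>n::nat. ball (0::'a) (real n))) = space lebesgue"
      by (auto, meson reals_Archimedean2)
    show "\<forall>a\<in>range (\<lambda>n::nat. ball (0::'a) (real n)). emeasure lebesgue a \<noteq> \<infinity>"
      using emeasure_bounded_finite[OF bounded_ball] by (auto simp: less_top[symmetric])
  qed auto
qed

interpretation lebesgue: sigma_finite_measure "lebesgue :: 'a::euclidean_space measure"
  by (rule sigma_finite_lebesgue)

interpretation lebesgue_pair: pair_sigma_finite "lebesgue :: 'a::euclidean_space measure" lebesgue ..

lemma borel_measurable_lebesgue_ident [measurable]:
  "(\<lambda>x::'a::euclidean_space. x) \<in> borel_measurable lebesgue"
  by (intro measurable_completion) simp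

lemma borel_measurable_lebesgue_patch:
  fixes u v :: "'a::euclidean_space \<Rightarrow> real"
  assumes [measurable]: "S \<in> sets lebesgue" "v \<in> borel_measurable lebesgue"
    and u: "set_borel_measurable lebesgue S u" and uv: "\<forall>x. x \<notin> S \<longrightarrow> u x = v x"
  shows "u \<in> borel_measurable lebesgue"
proof -
  have "u = (\<lambda>x. if x \<in> S then indicator S x *\<^sub>R u x else v x)"
    using uv by (auto simp: fun_eq_iff)
  also have "\<dots> \<in> borel_measurable lebesgue"
    using u unfolding set_borel_measurable_def by measurable
  finally show ?thesis .
qed

lemma borel_measurable_kernel_pair:
  fixes F :: "real \<Rightarrow> 'a::euclidean_space \<Rightarrow> real" and u :: "'a \<Rightarrow> real"
  assumes "(\<lambda>(t, x). F t x) \<in> borel_measurable borel" and [measurable]: "u \<in> borel_measurable lebesgue"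
  shows "(\<lambda>z. F (u (fst z) - u (snd z)) (fst z - snd z)) \<in> borel_measurable (lebesgue \<Otimes>\<^sub>M lebesgue)"
proof -
  have "(\<lambda>z. (u (fst z) - u (snd z), fst z - snd z)) \<in> borel_measurable (lebesgue \<Otimes>\<^sub>M lebesgue)"
    by measurable
  from measurable_compose[OF this assms(1)] show ?thesis by simp
qed

lemma borel_measurable_difference_quotient_pair [measurable]:
  fixes a b :: "'a::euclidean_space \<Rightarrow> real"
  assumes [measurable]: "a \<in> borel_measurable lebesgue" "b \<in> borel_measurable lebesgue"
  shows "(\<lambda>z. ennreal (\<bar>a (fst z) - b (snd z)\<bar> powr p / norm (fst z - snd z) powr q))
     \<in> borel_measurable (lebesgue \<Otimes>\<^sub>M lebesgue)"
  by measurable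

lemma nn_integral_iterated_indicator:
  fixes f :: "'a::euclidean_space \<Rightarrow> 'a \<Rightarrow> ennreal"
  assumes f: "(\<lambda>z. f (fst z) (snd z)) \<in> borel_measurable (lebesgue \<Otimes>\<^sub>M lebesgue)"
    and B: "B \<in> sets lebesgue"
  shows "(\<integral>\<^sup>+ x \<in> A. (\<integral>\<^sup>+ y \<in> B. f x y \<partial>lebesgue) \<partial>lebesgue)
       = (\<integral>\<^sup>+ x. (\<integral>\<^sup>+ y. indicator A x * indicator B y * f x y \<partial>lebesgue) \<partial>lebesgue)"
proof (rule nn_integral_cong)
  fix x :: 'a
  have "(\<lambda>y. f x y * indicator B y) \<in> borel_measurable lebesgue"
    using measurable_Pair2[OF f, of x] B by simp
  from nn_integral_cmult[OF this, of "indicator A x"]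
  show "(\<integral>\<^sup>+ y \<in> B. f x y \<partial>lebesgue) * indicator A x
      = (\<integral>\<^sup>+ y. indicator A x * indicator B y * f x y \<partial>lebesgue)"
    by (simp add: mult_ac)
qed

lemma nn_integral_iterated_eq_pair:
  fixes f :: "'a::euclidean_space \<Rightarrow> 'a \<Rightarrow> ennreal"
  assumes f: "(\<lambda>z. f (fst z) (snd z)) \<in> borel_measurable (lebesgue \<Otimes>\<^sub>M lebesgue)"
    and A: "A \<in> sets lebesgue" and B: "B \<in> sets lebesgue"
  shows "(\<integral>\<^sup>+ x \<in> A. (\<integral>\<^sup>+ y \<in> B. f x y \<partial>lebesgue) \<partial>lebesgue)
       = (\<integral>\<^sup>+ z. indicator A (fst z) * indicator B (snd z) * f (fst z) (snd z) \<partial>(lebesgue \<Otimes>\<^sub>M lebesgue))"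
proof -
  have "(\<lambda>z. indicator A (fst z) * indicator B (snd z) * f (fst z) (snd z))
      \<in> borel_measurable (lebesgue \<Otimes>\<^sub>M lebesgue)"
    using f A B by measurable
  from lebesgue.nn_integral_fst[OF this] show ?thesis
    by (simp add: nn_integral_iterated_indicator[OF f B])
qed

lemma nn_integral_iterated_cmult:
  fixes f :: "'a::euclidean_space \<Rightarrow> 'a \<Rightarrow> ennreal"
  assumes f: "(\<lambda>z. f (fst z) (snd z)) \<in> borel_measurable (lebesgue \<Otimes>\<^sub>M lebesgue)"
    and A: "A \<in> sets lebesgue" and B: "B \<in> sets lebesgue"
  shows "(\<integral>\<^sup>+ x \<in> A. (\<integral>\<^sup>+ y \<in> B. c * f x y \<partial>lebesgue) \<partial>lebesgue)
       = c * (\<integral>\<^sup>+ x \<in> A. (\<integral>\<^sup>+ y \<in> B. f x y \<partial>lebesgue) \<partial>lebesgue)"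
proof -
  have cf: "(\<lambda>z. c * f (fst z) (snd z)) \<in> borel_measurable (lebesgue \<Otimes>\<^sub>M lebesgue)"
    using f by measurable
  have "(\<lambda>z. indicator A (fst z) * indicator B (snd z) * f (fst z) (snd z))
      \<in> borel_measurable (lebesgue \<Otimes>\<^sub>M lebesgue)"
    using f A B by measurable
  from nn_integral_cmult[OF this, of c] show ?thesis
    using nn_integral_iterated_eq_pair[OF cf A B] nn_integral_iterated_eq_pair[OF f A B]
    by (simp add: mult_ac)
qed

lemma uAB_eq_pair:
  fixes F :: "real \<Rightarrow> 'a::euclidean_space \<Rightarrow> real"
  assumes "(\<lambda>(t, x). F t x) \<in> borel_measurable borel" "u \<in> borel_measurable lebesgue"
    and "A \<in> sets lebesgue" "B \<in> sets lebesgue"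
  shows "uAB F u A B = (\<integral>\<^sup>+ z. indicator A (fst z) * indicator B (snd z)
      * ennreal (F (u (fst z) - u (snd z)) (fst z - snd z)) \<partial>(lebesgue \<Otimes>\<^sub>M lebesgue))"
  unfolding uAB_def
  by (rule nn_integral_iterated_eq_pair) (use borel_measurable_kernel_pair[OF assms(1,2)] assms(3,4) in auto)

(* Disjointness keeps the diagonal, where the symmetry of F is not assumed, out of the domain. *)
lemma uAB_commute:
  fixes F :: "real \<Rightarrow> 'a::euclidean_space \<Rightarrow> real"
  assumes Fm: "(\<lambda>(t, x). F t x) \<in> borel_measurable borel" and um: "u \<in> borel_measurable lebesgue"
    and sym: "\<forall>t x. x \<noteq> 0 \<longrightarrow> F t x = F (-t) (-x)"
    and A: "A \<in> sets lebesgue" and B: "B \<in> sets lebesgue" and disj: "A \<inter> B = {}"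
  shows "uAB F u B A = uAB F u A B"
proof -
  define k where "k x y = indicator B x * indicator A y * ennreal (F (u x - u y) (x - y))" for x y
  have km: "(\<lambda>(x, y). k x y) \<in> borel_measurable (lebesgue \<Otimes>\<^sub>M lebesgue)"
    unfolding k_def case_prod_beta' using borel_measurable_kernel_pair[OF Fm um] A B by measurable
  have swap: "k x y = indicator A y * indicator B x * ennreal (F (u y - u x) (y - x))" for x y
  proof (cases "x \<in> B \<and> y \<in> A")
    case True
    with disj have "y - x \<noteq> 0" by auto
    from sym[rule_format, OF this, of "u y - u x"] True show ?thesis
      by (simp add: k_def)
  qed (auto simp: k_def)
  have "uAB F u B A = (\<integral>\<^sup>+ x. (\<integral>\<^sup>+ y. k x y \<partial>lebesgue) \<partial>lebesgue)"
    unfolding uAB_def k_def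
    by (rule nn_integral_iterated_indicator) (use borel_measurable_kernel_pair[OF Fm um] A in auto)
  also have "\<dots> = (\<integral>\<^sup>+ y. (\<integral>\<^sup>+ x. k x y \<partial>lebesgue) \<partial>lebesgue)"
    using lebesgue_pair.Fubini'[OF km] by simp
  also have "\<dots> = uAB F u A B"
    unfolding uAB_def swap
    by (rule nn_integral_iterated_indicator[symmetric]) (use borel_measurable_kernel_pair[OF Fm um] B in auto)
  finally show ?thesis .
qed

lemma K_R_eq_uAB_sum:
  fixes F :: "real \<Rightarrow> 'a::euclidean_space \<Rightarrow> real"
  assumes Fm: "(\<lambda>(t, x). F t x) \<in> borel_measurable borel" and um: "u \<in> borel_measurable lebesgue"
  shows "K_R F R u = uAB F u (ball 0 R) (ball 0 R) + uAB F u (ball 0 R) (- ball 0 R)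
                     + uAB F u (- ball 0 R) (ball 0 R)"
proof -
  define B where "B = ball (0::'a) R"
  define H where "H z = ennreal (F (u (fst z) - u (snd z)) (fst z - snd z))" for z
  define k where "k S T z = indicator S (fst z) * indicator T (snd z) * H z" for S T z
  have [measurable]: "B \<in> sets lebesgue" "- B \<in> sets lebesgue"
    unfolding B_def by auto
  have [measurable]: "H \<in> borel_measurable (lebesgue \<Otimes>\<^sub>M lebesgue)"
    unfolding H_def using borel_measurable_kernel_pair[OF Fm um] by measurable
  have k_meas: "k S T \<in> borel_measurable (lebesgue \<Otimes>\<^sub>M lebesgue)"
    if [measurable]: "S \<in> sets lebesgue" "T \<in> sets lebesgue" for S T
    unfolding k_def by measurable
  have split: "indicator (UNIV - (- B) \<times> (- B)) z * H z = k B B z + k B (- B) z + k (- B) B z" for z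
    unfolding k_def by (cases z) (auto simp: indicator_def)
  have "(\<lambda>z. indicator (UNIV - (- B) \<times> (- B)) z * H z) \<in> borel_measurable (lebesgue \<Otimes>\<^sub>M lebesgue)"
    by measurable
  from lebesgue.nn_integral_fst[OF this]
  have "K_R F R u = (\<integral>\<^sup>+ z. indicator (UNIV - (- B) \<times> (- B)) z * H z \<partial>(lebesgue \<Otimes>\<^sub>M lebesgue))"
    by (simp add: K_R_def H_def B_def)
  also have "\<dots> = (\<integral>\<^sup>+ z. k B B z + k B (- B) z + k (- B) B z \<partial>(lebesgue \<Otimes>\<^sub>M lebesgue))"
    by (simp only: split)
  also have "\<dots> = integral\<^sup>N (lebesgue \<Otimes>\<^sub>M lebesgue) (k B B) + integral\<^sup>N (lebesgue \<Otimes>\<^sub>M lebesgue) (k B (- B))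
      + integral\<^sup>N (lebesgue \<Otimes>\<^sub>M lebesgue) (k (- B) B)"
    using k_meas by (simp add: nn_integral_add)
  also have "\<dots> = uAB F u B B + uAB F u B (- B) + uAB F u (- B) B"
    unfolding k_def H_def by (simp add: uAB_eq_pair[OF Fm um])
  finally show ?thesis unfolding B_def .
qed

lemma K_R_eq_uAB:
  fixes F :: "real \<Rightarrow> 'a::euclidean_space \<Rightarrow> real"
  assumes Fm: "(\<lambda>(t, x). F t x) \<in> borel_measurable borel" and um: "u \<in> borel_measurable lebesgue"
    and sym: "\<forall>t x. x \<noteq> 0 \<longrightarrow> F t x = F (-t) (-x)"
  shows "K_R F R u = uAB F u (ball 0 R) (ball 0 R) + 2 * uAB F u (ball 0 R) (- ball 0 R)"
  using K_R_eq_uAB_sum[OF Fm um, of R] uAB_commute[OF Fm um sym, of "ball 0 R" "- ball 0 R"]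
  by (simp add: mult_2 add.assoc)

lemma uAB_le_gagliardo_pow:
  fixes F :: "real \<Rightarrow> 'a::euclidean_space \<Rightarrow> real"
  assumes um: "u \<in> borel_measurable lebesgue" and \<Omega>: "\<Omega> \<in> sets lebesgue" and cS: "0 \<le> cS"
    and upper: "\<forall>t x. x \<noteq> 0 \<longrightarrow> F t x \<le> cS * \<bar>t\<bar> powr p / norm x powr (real DIM('a) + s * p)"
  shows "uAB F u \<Omega> \<Omega> \<le> ennreal cS * gagliardo_pow s p u \<Omega>"
proof -
  define G where "G x y = ennreal (\<bar>u x - u y\<bar> powr p / norm (x - y) powr (real DIM('a) + s * p))" for x y
  have pointwise: "AE y in lebesgue. ennreal (F (u x - u y) (x - y)) * indicator \<Omega> y
      \<le> ennreal cS * G x y * indicator \<Omega> y" for x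
    using AE_completion[OF AE_lborel_singleton[of x]]
  proof eventually_elim
    case (elim y)
    then have "F (u x - u y) (x - y) \<le> cS * (\<bar>u x - u y\<bar> powr p / norm (x - y) powr (real DIM('a) + s * p))"
      using upper[rule_format, of "x - y" "u x - u y"] by simp
    with cS show ?case
      unfolding G_def by (intro mult_right_mono) (simp_all add: ennreal_mult[symmetric] ennreal_leI)
  qed
  have "uAB F u \<Omega> \<Omega> \<le> (\<integral>\<^sup>+ x \<in> \<Omega>. (\<integral>\<^sup>+ y \<in> \<Omega>. ennreal cS * G x y \<partial>lebesgue) \<partial>lebesgue)"
    unfolding uAB_def
    by (intro nn_integral_mono mult_right_mono nn_integral_mono_AE pointwise) simp
  also have "\<dots> = ennreal cS * gagliardo_pow s p u \<Omega>"
    unfolding gagliardo_pow_def G_def using um \<Omega> by (intro nn_integral_iterated_cmult) auto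
  finally show ?thesis .
qed

lemma ex_dyadic_shell:
  fixes r t :: real
  assumes r: "0 < r" and t: "r \<le> t"
  shows "\<exists>k::nat. 2 ^ k * r \<le> t \<and> t < 2 ^ Suc k * r"
proof -
  obtain m :: nat where "t / r < 2 ^ m"
    using real_arch_pow[of 2 "t / r"] by auto
  with r have "t < 2 ^ m * r"
    by (simp add: divide_less_eq)
  also have "\<dots> \<le> 2 ^ Suc m * r"
    using r by simp
  finally have ex: "\<exists>k::nat. t < 2 ^ Suc k * r" ..
  define k where "k = (LEAST k::nat. t < 2 ^ Suc k * r)"
  have upper: "t < 2 ^ Suc k * r"
    unfolding k_def by (rule LeastI_ex[OF ex])
  have lower: "2 ^ k * r \<le> t"
  proof (cases k)
    case (Suc j)
    then have "\<not> t < 2 ^ Suc j * r"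
      using not_less_Least[of j "\<lambda>k. t < 2 ^ Suc k * r"] k_def by simp
    with Suc show ?thesis by simp
  qed (use t in simp)
  from lower upper show ?thesis by blast
qed

lemma norm_powr_outside_ball_le_dyadic_sum:
  fixes y :: "'a::real_normed_vector" and r \<alpha> :: real
  assumes r: "0 < r" and \<alpha>: "0 \<le> \<alpha>"
  shows "ennreal (norm y powr - \<alpha>) * indicator (- ball 0 r) y
      \<le> (\<Sum>k. ennreal ((2 ^ k * r) powr - \<alpha>) * indicator (ball 0 (2 ^ Suc k * r)) y)"
proof (cases "y \<in> ball 0 r")
  case False
  then obtain k :: nat where k: "2 ^ k * r \<le> norm y" "norm y < 2 ^ Suc k * r"
    using ex_dyadic_shell[OF r, of "norm y"] by auto
  have "norm y powr - \<alpha> \<le> (2 ^ k * r) powr - \<alpha>"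
    using r \<alpha> k(1) by (intro powr_mono2') auto
  with False k(2) have "ennreal (norm y powr - \<alpha>) * indicator (- ball 0 r) y
      \<le> ennreal ((2 ^ k * r) powr - \<alpha>) * indicator (ball 0 (2 ^ Suc k * r)) y"
    by (simp add: ennreal_leI)
  also have "\<dots> \<le> (\<Sum>k. ennreal ((2 ^ k * r) powr - \<alpha>) * indicator (ball 0 (2 ^ Suc k * r)) y)"
    using sum_le_suminf[OF summableI, of "{k}"] by simp
  finally show ?thesis .
qed simp

lemma powr_mult_emeasure_dyadic_ball:
  fixes r \<beta> :: real
  assumes r: "0 < r"
  shows "ennreal ((2 ^ k * r) powr - (real DIM('a) + \<beta>)) * emeasure lebesgue (ball (0::'a::euclidean_space) (2 ^ Suc k * r))
      = ennreal (2 ^ DIM('a) * r powr - \<beta> * (2 powr - \<beta>) ^ k) * emeasure lebesgue (ball (0::'a) 1)"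
proof -
  define n where "n = DIM('a)"
  define \<rho> where "\<rho> = 2 ^ k * r"
  have \<rho>: "0 < \<rho>"
    unfolding \<rho>_def using r by simp
  have "\<rho> powr - (real n + \<beta>) * (2 * \<rho>) ^ n = 2 ^ n * (\<rho> powr - (real n + \<beta>) * \<rho> powr real n)"
    using \<rho> by (simp add: power_mult_distrib powr_realpow)
  also have "\<rho> powr - (real n + \<beta>) * \<rho> powr real n = \<rho> powr - \<beta>"
    by (simp add: powr_add[symmetric])
  also have "\<rho> powr - \<beta> = r powr - \<beta> * (2 powr - \<beta>) ^ k"
    unfolding \<rho>_def using r
    by (simp add: powr_mult powr_power powr_realpow[symmetric] powr_powr mult.commute)
  finally have powr_eq: "\<rho> powr - (real n + \<beta>) * (2 * \<rho>) ^ n = 2 ^ n * r powr - \<beta> * (2 powr - \<beta>) ^ k"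
    by simp
  have "ennreal (\<rho> powr - (real n + \<beta>)) * emeasure lebesgue (ball (0::'a) (2 * \<rho>))
      = ennreal (\<rho> powr - (real n + \<beta>)) * ennreal ((2 * \<rho>) ^ n) * emeasure lebesgue (ball (0::'a) 1)"
    unfolding n_def using \<rho> by (subst emeasure_lebesgue_ball_conv_unit_ball) (auto simp: mult.assoc)
  also have "ennreal (\<rho> powr - (real n + \<beta>)) * ennreal ((2 * \<rho>) ^ n)
      = ennreal (2 ^ n * r powr - \<beta> * (2 powr - \<beta>) ^ k)"
    unfolding powr_eq[symmetric] by (rule ennreal_mult'[symmetric]) simp
  finally show ?thesis
    by (simp add: \<rho>_def n_def mult.assoc)
qed

lemma nn_integral_norm_powr_outside_ball_finite:
  fixes r \<beta> :: real
  assumes r: "0 < r" and \<beta>: "0 < \<beta>"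
  shows "(\<integral>\<^sup>+ y \<in> - ball (0::'a::euclidean_space) r.
           ennreal (norm y powr - (real DIM('a) + \<beta>)) \<partial>lebesgue) < \<infinity>"
proof -
  define \<alpha> where "\<alpha> = real DIM('a) + \<beta>"
  define g where "g k = 2 ^ DIM('a) * r powr - \<beta> * (2 powr - \<beta>) ^ k" for k :: nat
  have [measurable]: "ball (0::'a) \<rho> \<in> sets lebesgue" for \<rho>
    by simp
  have "(\<integral>\<^sup>+ y \<in> - ball (0::'a) r. ennreal (norm y powr - \<alpha>) \<partial>lebesgue)
      \<le> (\<integral>\<^sup>+ y. (\<Sum>k. ennreal ((2 ^ k * r) powr - \<alpha>) * indicator (ball (0::'a) (2 ^ Suc k * r)) y) \<partial>lebesgue)"
    using r \<beta> by (intro nn_integral_mono norm_powr_outside_ball_le_dyadic_sum) (auto simp: \<alpha>_def)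
  also have "\<dots> = (\<Sum>k. ennreal ((2 ^ k * r) powr - \<alpha>) * emeasure lebesgue (ball (0::'a) (2 ^ Suc k * r)))"
    by (subst nn_integral_suminf, measurable) (auto simp: nn_integral_cmult_indicator)
  also have "\<dots> = (\<Sum>k. ennreal (g k)) * emeasure lebesgue (ball (0::'a) 1)"
    unfolding \<alpha>_def g_def powr_mult_emeasure_dyadic_ball[OF r] by simp
  also have "\<dots> < \<infinity>"
  proof -
    have "2 powr - \<beta> < (1::real)"
      using \<beta> by (simp add: powr_less_one)
    then have "summable g"
      unfolding g_def by (intro summable_mult summable_geometric) simp
    then have "(\<Sum>k. ennreal (g k)) \<noteq> top"
      by (rule ennreal_suminf_neq_top) (simp add: g_def)
    then have "(\<Sum>k. ennreal (g k)) < \<infinity>"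
      by (simp add: less_top)
    moreover have "emeasure lebesgue (ball (0::'a) 1) < \<infinity>"
      using emeasure_bounded_finite[OF bounded_ball] by (simp add: less_top)
    ultimately show ?thesis
      by (simp add: ennreal_mult_less_top)
  qed
  finally show ?thesis
    unfolding \<alpha>_def .
qed

lemma powr_add_le_two_powr:
  fixes a b p :: real
  assumes "0 \<le> a" "0 \<le> b" "0 < p"
  shows "(a + b) powr p \<le> 2 powr p * (a powr p + b powr p)"
proof -
  have "(a + b) powr p \<le> (2 * max a b) powr p"
    using assms by (intro powr_mono2) auto
  also have "\<dots> = 2 powr p * max a b powr p"
    using assms by (simp add: powr_mult)
  also have "\<dots> \<le> 2 powr p * (a powr p + b powr p)"
    by (intro mult_left_mono) (auto simp: max_def)
  finally show ?thesis .
qed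

lemma difference_quotient_far_le:
  fixes x y :: "'a::real_normed_vector" and a v M p \<alpha> R :: real
  assumes x: "norm x < R" and y: "2 * R \<le> norm y" and v: "\<bar>v\<bar> \<le> M" and p: "0 < p" and \<alpha>: "0 < \<alpha>"
  shows "\<bar>a - v\<bar> powr p / norm (x - y) powr \<alpha>
      \<le> 2 powr (p + \<alpha>) * (\<bar>a\<bar> powr p + M powr p) * norm y powr - \<alpha>"
proof -
  have y_pos: "0 < norm y"
    using x y norm_ge_zero[of x] by linarith
  have "\<bar>a - v\<bar> powr p \<le> (\<bar>a\<bar> + M) powr p"
    using v p by (intro powr_mono2) auto
  also have "\<dots> \<le> 2 powr p * (\<bar>a\<bar> powr p + M powr p)"
    using v p by (intro powr_add_le_two_powr) auto
  finally have num: "\<bar>a - v\<bar> powr p \<le> 2 powr p * (\<bar>a\<bar> powr p + M powr p)" .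
  have "norm y / 2 \<le> norm (x - y)"
    using norm_triangle_ineq2[of y x] x y by (simp add: norm_minus_commute)
  then have "(norm y / 2) powr \<alpha> \<le> norm (x - y) powr \<alpha>"
    using y_pos \<alpha> by (intro powr_mono2) auto
  then have den: "norm y powr \<alpha> / 2 powr \<alpha> \<le> norm (x - y) powr \<alpha>"
    using y_pos by (simp add: powr_divide)
  have "\<bar>a - v\<bar> powr p / norm (x - y) powr \<alpha>
      \<le> 2 powr p * (\<bar>a\<bar> powr p + M powr p) / (norm y powr \<alpha> / 2 powr \<alpha>)"
    using num den y_pos by (intro frac_le) auto
  also have "\<dots> = 2 powr (p + \<alpha>) * (\<bar>a\<bar> powr p + M powr p) * norm y powr - \<alpha>"
    using y_pos by (simp add: powr_add powr_minus_divide field_simps)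
  finally show ?thesis .
qed

lemma kernel_outside_ball_le:
  fixes F :: "real \<Rightarrow> 'a::euclidean_space \<Rightarrow> real"
  assumes upper: "\<forall>t x. x \<noteq> 0 \<longrightarrow> F t x \<le> cS * \<bar>t\<bar> powr p / norm x powr (real DIM('a) + s * p)"
    and cS: "0 \<le> cS" and p: "0 < p" and s: "0 \<le> s"
    and x: "x \<in> ball 0 R" and y: "y \<notin> ball 0 R" and v: "\<bar>v\<bar> \<le> M"
  defines "\<alpha> \<equiv> real DIM('a) + s * p"
  shows "ennreal (F (a - v) (x - y))
      \<le> ennreal cS * (ennreal (\<bar>a - v\<bar> powr p / norm (x - y) powr \<alpha>) * indicator (ball 0 (2 * R)) y)
        + ennreal (cS * 2 powr (p + \<alpha>) * (\<bar>a\<bar> powr p + M powr p))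
          * (ennreal (norm y powr - \<alpha>) * indicator (- ball 0 (2 * R)) y)"
proof -
  define K where "K = cS * 2 powr (p + \<alpha>) * (\<bar>a\<bar> powr p + M powr p)"
  have "x - y \<noteq> 0"
    using x y by auto
  with upper have F_le: "F (a - v) (x - y) \<le> cS * (\<bar>a - v\<bar> powr p / norm (x - y) powr \<alpha>)"
    by (auto simp: \<alpha>_def)
  show ?thesis
  proof (cases "y \<in> ball 0 (2 * R)")
    case True
    with F_le cS show ?thesis
      by (simp add: ennreal_mult[symmetric] ennreal_leI add_increasing2)
  next
    case False
    have "0 < \<alpha>"
      unfolding \<alpha>_def using s p by (simp add: add_pos_nonneg)
    with False x v p have "\<bar>a - v\<bar> powr p / norm (x - y) powr \<alpha>
        \<le> 2 powr (p + \<alpha>) * (\<bar>a\<bar> powr p + M powr p) * norm y powr - \<alpha>"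
      by (intro difference_quotient_far_le) auto
    with F_le cS have "F (a - v) (x - y) \<le> K * norm y powr - \<alpha>"
      unfolding K_def by (smt (verit) mult.assoc mult_left_mono)
    moreover have "0 \<le> K"
      unfolding K_def using cS by simp
    ultimately have "ennreal (F (a - v) (x - y)) \<le> ennreal K * ennreal (norm y powr - \<alpha>)"
      by (simp add: ennreal_mult[symmetric] ennreal_leI)
    with False show ?thesis
      by (simp add: K_def add_increasing)
  qed
qed

lemma nn_integral_kernel_outside_ball_le:
  fixes F :: "real \<Rightarrow> 'a::euclidean_space \<Rightarrow> real" and u \<phi> :: "'a \<Rightarrow> real"
  assumes upper: "\<forall>t x. x \<noteq> 0 \<longrightarrow> F t x \<le> cS * \<bar>t\<bar> powr p / norm x powr (real DIM('a) + s * p)"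
    and cS: "0 \<le> cS" and p: "0 < p" and s: "0 \<le> s"
    and \<phi>m [measurable]: "\<phi> \<in> borel_measurable lebesgue" and \<phi>M: "AE y in lebesgue. \<bar>\<phi> y\<bar> \<le> M"
    and outside: "\<forall>y. y \<notin> ball 0 R \<longrightarrow> u y = \<phi> y" and x: "x \<in> ball 0 R"
  defines "\<alpha> \<equiv> real DIM('a) + s * p"
  shows "(\<integral>\<^sup>+ y \<in> - ball 0 R. ennreal (F (u x - u y) (x - y)) \<partial>lebesgue)
      \<le> ennreal cS * (\<integral>\<^sup>+ y \<in> ball 0 (2 * R) - ball 0 R.
            ennreal (\<bar>u x - \<phi> y\<bar> powr p / norm (x - y) powr \<alpha>) \<partial>lebesgue)
        + ennreal (cS * 2 powr (p + \<alpha>) * (\<bar>u x\<bar> powr p + M powr p))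
          * (\<integral>\<^sup>+ y \<in> - ball (0::'a) (2 * R). ennreal (norm y powr - \<alpha>) \<partial>lebesgue)"
proof -
  define A where "A = ball (0::'a) (2 * R) - ball 0 R"
  define D where "D = - ball (0::'a) (2 * R)"
  define K where "K = cS * 2 powr (p + \<alpha>) * (\<bar>u x\<bar> powr p + M powr p)"
  define G where "G y = ennreal (\<bar>u x - \<phi> y\<bar> powr p / norm (x - y) powr \<alpha>)" for y
  have [measurable]: "A \<in> sets lebesgue" "D \<in> sets lebesgue" "G \<in> borel_measurable lebesgue"
    unfolding A_def D_def G_def by auto
  have pointwise: "ennreal (F (u x - u y) (x - y)) * indicator (- ball 0 R) y
      \<le> ennreal cS * (G y * indicator A y) + ennreal K * (ennreal (norm y powr - \<alpha>) * indicator D y)"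
    if "\<bar>\<phi> y\<bar> \<le> M" for y
  proof (cases "y \<in> ball 0 R")
    case False
    with outside have "u y = \<phi> y"
      by simp
    with False kernel_outside_ball_le[OF upper cS p s x False that, of "u x"] show ?thesis
      by (simp add: A_def D_def G_def K_def \<alpha>_def indicator_def)
  qed simp
  have "(\<integral>\<^sup>+ y \<in> - ball 0 R. ennreal (F (u x - u y) (x - y)) \<partial>lebesgue)
      \<le> (\<integral>\<^sup>+ y. ennreal cS * (G y * indicator A y)
            + ennreal K * (ennreal (norm y powr - \<alpha>) * indicator D y) \<partial>lebesgue)"
    using \<phi>M by (intro nn_integral_mono_AE) (auto elim: eventually_mono intro: pointwise)
  also have "\<dots> = ennreal cS * (\<integral>\<^sup>+ y \<in> A. G y \<partial>lebesgue)
      + ennreal K * (\<integral>\<^sup>+ y \<in> D. ennreal (norm y powr - \<alpha>) \<partial>lebesgue)"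
    by (simp add: nn_integral_add nn_integral_cmult)
  finally show ?thesis
    unfolding A_def D_def G_def K_def .
qed

lemma uAB_ball_outside_le:
  fixes F :: "real \<Rightarrow> 'a::euclidean_space \<Rightarrow> real" and u \<phi> :: "'a \<Rightarrow> real"
  assumes upper: "\<forall>t x. x \<noteq> 0 \<longrightarrow> F t x \<le> cS * \<bar>t\<bar> powr p / norm x powr (real DIM('a) + s * p)"
    and cS: "0 \<le> cS" and p: "0 < p" and s: "0 \<le> s"
    and um [measurable]: "u \<in> borel_measurable lebesgue"
    and \<phi>m [measurable]: "\<phi> \<in> borel_measurable lebesgue" and \<phi>M: "AE y in lebesgue. \<bar>\<phi> y\<bar> \<le> M"
    and outside: "\<forall>y. y \<notin> ball 0 R \<longrightarrow> u y = \<phi> y"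
  defines "\<alpha> \<equiv> real DIM('a) + s * p"
    and "T \<equiv> \<integral>\<^sup>+ y \<in> - ball (0::'a) (2 * R). ennreal (norm y powr - (real DIM('a) + s * p)) \<partial>lebesgue"
  shows "uAB F u (ball 0 R) (- ball 0 R) \<le> ennreal cS * bdry_pow s p R u \<phi>
     + ennreal (cS * 2 powr (p + \<alpha>)) * T * Lp_pow p u (ball 0 R)
     + ennreal (cS * 2 powr (p + \<alpha>) * M powr p) * T * emeasure lebesgue (ball (0::'a) R)"
proof -
  define B where "B = ball (0::'a) R"
  define K where "K = cS * 2 powr (p + \<alpha>)"
  define I where "I x = (\<integral>\<^sup>+ y \<in> ball 0 (2 * R) - B.
      ennreal (\<bar>u x - \<phi> y\<bar> powr p / norm (x - y) powr \<alpha>) \<partial>lebesgue)" for x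
  have K: "0 \<le> K"
    unfolding K_def using cS by simp
  have [measurable]: "B \<in> sets lebesgue" "ball 0 (2 * R) - B \<in> sets lebesgue"
    unfolding B_def by auto
  have "(\<lambda>(x, y). ennreal (\<bar>u x - \<phi> y\<bar> powr p / norm (x - y) powr \<alpha>) * indicator (ball 0 (2 * R) - B) y)
      \<in> borel_measurable (lebesgue \<Otimes>\<^sub>M lebesgue)"
    using borel_measurable_difference_quotient_pair[OF um \<phi>m, of p \<alpha>]
    unfolding case_prod_beta' by measurable
  then have [measurable]: "I \<in> borel_measurable lebesgue"
    unfolding I_def by (rule lebesgue.borel_measurable_nn_integral)
  have pointwise: "(\<integral>\<^sup>+ y \<in> - B. ennreal (F (u x - u y) (x - y)) \<partial>lebesgue)
      \<le> ennreal cS * I x + ennreal K * T * ennreal (\<bar>u x\<bar> powr p) + ennreal (K * M powr p) * T"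
    if "x \<in> B" for x
  proof -
    from nn_integral_kernel_outside_ball_le[OF upper cS p s \<phi>m \<phi>M outside that[unfolded B_def]]
    have "(\<integral>\<^sup>+ y \<in> - B. ennreal (F (u x - u y) (x - y)) \<partial>lebesgue)
        \<le> ennreal cS * I x + ennreal (K * (\<bar>u x\<bar> powr p + M powr p)) * T"
      unfolding I_def B_def K_def T_def \<alpha>_def .
    also have "ennreal (K * (\<bar>u x\<bar> powr p + M powr p)) * T
        = ennreal K * T * ennreal (\<bar>u x\<bar> powr p) + ennreal (K * M powr p) * T"
      using K by (simp add: distrib_left distrib_right ennreal_plus ennreal_mult mult_ac)
    finally show ?thesis
      by (simp add: add.assoc)
  qed
  have "uAB F u B (- B)
      \<le> (\<integral>\<^sup>+ x \<in> B. ennreal cS * I x + ennreal K * T * ennreal (\<bar>u x\<bar> powr p)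
            + ennreal (K * M powr p) * T \<partial>lebesgue)"
    unfolding uAB_def
  proof (rule nn_integral_mono)
    fix x
    show "(\<integral>\<^sup>+ y \<in> - B. ennreal (F (u x - u y) (x - y)) \<partial>lebesgue) * indicator B x
        \<le> (ennreal cS * I x + ennreal K * T * ennreal (\<bar>u x\<bar> powr p) + ennreal (K * M powr p) * T)
          * indicator B x"
      using pointwise[of x] by (cases "x \<in> B") auto
  qed
  also have "\<dots> = ennreal cS * (\<integral>\<^sup>+ x \<in> B. I x \<partial>lebesgue)
      + ennreal K * T * (\<integral>\<^sup>+ x \<in> B. ennreal (\<bar>u x\<bar> powr p) \<partial>lebesgue)
      + ennreal (K * M powr p) * T * emeasure lebesgue B"
    by (simp add: nn_set_integral_add nn_integral_cmult nn_integral_cmult_indicator mult.assoc)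
  finally show ?thesis
    by (simp add: B_def K_def I_def bdry_pow_def Lp_pow_def \<alpha>_def)
qed

lemma continuous_abs_le_Linfty_norm:
  fixes f :: "'a::euclidean_space \<Rightarrow> real"
  assumes f: "continuous_on UNIV f" and M: "Linfty_norm f = ereal M"
  shows "\<bar>f t\<bar> \<le> M"
proof (rule ccontr)
  define U where "U = {x. M < \<bar>f x\<bar>}"
  assume "\<not> \<bar>f t\<bar> \<le> M"
  then have "t \<in> U"
    by (simp add: U_def)
  have "open U"
    unfolding U_def by (intro open_Collect_less continuous_intros f)
  with \<open>t \<in> U\<close> obtain e where e: "0 < e" "ball t e \<subseteq> U"
    using open_contains_ball by blast
  have "AE x in lebesgue. \<bar>f x\<bar> \<le> M"
    using esssup_AE[of "\<lambda>x. ereal \<bar>f x\<bar>" lebesgue] M by (simp add: Linfty_norm_def)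
  then have "AE x in lborel. x \<notin> U"
    by (simp add: AE_completion_iff U_def not_less)
  with \<open>open U\<close> have "emeasure lborel U = 0"
    by (simp add: AE_iff_measurable[of U])
  moreover have "emeasure lborel (ball t e) \<le> emeasure lborel U"
    using e \<open>open U\<close> by (intro emeasure_mono) auto
  ultimately show False
    using e unit_ball_vol_pos[of "real DIM('a)"] by (simp add: emeasure_ball)
qed

lemma ennreal_affine_le_real_multiple:
  fixes a b :: ennreal
  assumes "a < \<infinity>" "b < \<infinity>"
  obtains C :: real where "0 < C" "\<And>x. a * x + b \<le> ennreal C * (x + 1)"
proof -
  from assms obtain C where C: "a + b + 1 = ennreal C"
    by (cases "a + b + 1" rule: ennreal_cases) (auto simp: ennreal_mult_less_top)
  have "0 < C"
  proof (rule ccontr)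
    assume "\<not> 0 < C"
    then have "a + b + 1 = 0"
      by (simp add: C ennreal_neg)
    then show False
      by simp
  qed
  moreover have "a * x + b \<le> ennreal C * (x + 1)" for x
  proof -
    have "ennreal C * (x + 1) = (a * x + b) + (a + b * x + x + 1)"
      unfolding C[symmetric] by (simp add: distrib_left distrib_right add_ac)
    then show ?thesis
      by (simp add: add_increasing2)
  qed
  ultimately show thesis
    by (rule that)
qed

lemma borel_measurable_W_R_phi:
  assumes \<phi>: "\<phi> \<in> X_R s p R" and u: "u \<in> W_R_phi s p R \<phi>"
  shows "u \<in> borel_measurable lebesgue"
proof -
  have "\<phi> \<in> borel_measurable lebesgue"
    using \<phi> unfolding X_R_def in_Linfty_def by blast
  moreover have "set_borel_measurable lebesgue (ball 0 R) u" "\<forall>x. x \<notin> ball 0 R \<longrightarrow> u x = \<phi> x"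
    using u unfolding W_R_phi_def in_Wsp_def by blast+
  ultimately show ?thesis
    by (intro borel_measurable_lebesgue_patch[of "ball 0 R" \<phi> u]) auto
qed

lemma energy_le:
  fixes F :: "real \<Rightarrow> 'a::euclidean_space \<Rightarrow> real" and W :: "real \<Rightarrow> real" and \<phi> u :: "'a \<Rightarrow> real"
  assumes s: "0 < s" and p: "1 \<le> p" and cS: "0 \<le> cS"
    and F: "admissible_F s p cS F" and W: "admissible_W W" "Linfty_norm W = ereal MW"
    and \<phi>: "\<phi> \<in> X_R s p R" "Linfty_norm \<phi> = ereal M\<phi>" and u: "u \<in> W_R_phi s p R \<phi>"
  defines "\<alpha> \<equiv> real DIM('a) + s * p"
    and "T \<equiv> \<integral>\<^sup>+ y \<in> - ball (0::'a) (2 * R). ennreal (norm y powr - (real DIM('a) + s * p)) \<partial>lebesgue"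
    and "V \<equiv> emeasure lebesgue (ball (0::'a) R)"
  shows "energy F W R u
    \<le> ennreal (2 * cS) * (1 + ennreal (2 powr (p + \<alpha>)) * T) * (Wsp_norm_pow s p u (ball 0 R) + bdry_pow s p R u \<phi>)
      + (ennreal (2 * cS * 2 powr (p + \<alpha>) * M\<phi> powr p) * T + ennreal MW) * V"
proof -
  define K where "K = 2 powr (p + \<alpha>)"
  define A where "A = ennreal (2 * cS) * (1 + ennreal K * T)"
  define G where "G = gagliardo_pow s p u (ball 0 R)"
  define L where "L = Lp_pow p u (ball 0 R)"
  define D where "D = bdry_pow s p R u \<phi>"
  have Fm: "(\<lambda>(t, x). F t x) \<in> borel_measurable borel"
    and sym: "\<forall>t x. x \<noteq> 0 \<longrightarrow> F t x = F (-t) (-x)"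
    and upper: "\<forall>t x. x \<noteq> 0 \<longrightarrow> F t x \<le> cS * \<bar>t\<bar> powr p / norm x powr (real DIM('a) + s * p)"
    using F unfolding admissible_F_def by blast+
  have \<phi>m: "\<phi> \<in> borel_measurable lebesgue"
    using \<phi> unfolding X_R_def in_Linfty_def by blast
  have outside: "\<forall>x. x \<notin> ball 0 R \<longrightarrow> u x = \<phi> x"
    using u unfolding W_R_phi_def by blast
  have um: "u \<in> borel_measurable lebesgue"
    using \<phi>(1) u by (rule borel_measurable_W_R_phi)
  have \<phi>M: "AE y in lebesgue. \<bar>\<phi> y\<bar> \<le> M\<phi>"
    using esssup_AE[of "\<lambda>x. ereal \<bar>\<phi> x\<bar>" lebesgue] \<phi>(2) by (simp add: Linfty_norm_def)
  have W_le: "W t \<le> MW" for t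
    using continuous_abs_le_Linfty_norm[of W MW t] W C1_differentiable_imp_continuous_on
    unfolding admissible_W_def by fastforce
  have A_eq: "A = ennreal (2 * cS) + ennreal (2 * cS) * ennreal K * T"
    by (simp add: A_def distrib_left mult.assoc)
  have "ennreal cS \<le> A"
    using cS by (simp add: A_eq ennreal_leI add_increasing2)
  moreover have "uAB F u (ball 0 R) (ball 0 R) \<le> ennreal cS * G"
    unfolding G_def using um cS upper by (intro uAB_le_gagliardo_pow) auto
  ultimately have BB: "uAB F u (ball 0 R) (ball 0 R) \<le> A * G"
    by (meson dual_order.trans mult_right_mono zero_le)
  have "2 * uAB F u (ball 0 R) (- ball 0 R)
      \<le> 2 * (ennreal cS * D + ennreal (cS * K) * T * L + ennreal (cS * K * M\<phi> powr p) * T * V)"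
    using uAB_ball_outside_le[OF upper cS _ _ um \<phi>m \<phi>M outside] s p
    by (intro mult_left_mono) (simp_all add: D_def L_def K_def T_def V_def \<alpha>_def)
  also have "\<dots> = ennreal (2 * cS) * D + ennreal (2 * cS) * ennreal K * T * L
      + ennreal (2 * cS * K * M\<phi> powr p) * T * V"
    using cS by (simp add: distrib_left ennreal_mult mult.assoc K_def)
  also have "\<dots> \<le> A * D + A * L + ennreal (2 * cS * K * M\<phi> powr p) * T * V"
    by (intro add_mono mult_right_mono order_refl) (simp_all add: A_eq add_increasing2 add_increasing)
  finally have BC: "2 * uAB F u (ball 0 R) (- ball 0 R)
      \<le> A * D + A * L + ennreal (2 * cS * K * M\<phi> powr p) * T * V" .
  have W_int: "(\<integral>\<^sup>+ x \<in> ball 0 R. ennreal (W (u x)) \<partial>lebesgue) \<le> ennreal MW * V"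
    unfolding V_def
    by (subst nn_integral_cmult_indicator[symmetric]) (auto intro!: nn_integral_mono mult_right_mono ennreal_leI W_le)
  have "energy F W R u \<le> A * G + (A * D + A * L + ennreal (2 * cS * K * M\<phi> powr p) * T * V) + ennreal MW * V"
    unfolding energy_def K_R_eq_uAB[OF Fm um sym] by (intro add_mono BB BC W_int)
  also have "\<dots> = A * (L + G + D) + (ennreal (2 * cS * K * M\<phi> powr p) * T + ennreal MW) * V"
    by (simp add: distrib_left distrib_right add_ac)
  finally show ?thesis
    by (simp add: A_def K_def G_def L_def D_def Wsp_norm_pow_def)
qed

theorem proposition2:
  fixes s p R cS MW Mphi :: real
  assumes "0 < s" and "s < 1" and "1 \<le> p" and "0 < R" and "0 < cS"
  shows "\<exists>C>0. \<forall>(F :: real \<Rightarrow> 'a::euclidean_space \<Rightarrow> real) W \<phi> u.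
           admissible_F s p cS F \<and> admissible_W W \<and> Linfty_norm W = ereal MW \<and>
           \<phi> \<in> X_R s p R \<and> Linfty_norm \<phi> = ereal Mphi \<and> u \<in> W_R_phi s p R \<phi> \<longrightarrow>
             energy F W R u \<le> ennreal C * (Wsp_norm_pow s p u (ball 0 R) + bdry_pow s p R u \<phi> + 1) \<and>
             K_R F R u = uAB F u (ball 0 R) (ball 0 R) + 2 * uAB F u (ball 0 R) (- ball 0 R)"
proof -
  define \<alpha> where "\<alpha> = real DIM('a) + s * p"
  define T where "T = (\<integral>\<^sup>+ y \<in> - ball (0::'a) (2 * R). ennreal (norm y powr - \<alpha>) \<partial>lebesgue)"
  define V where "V = emeasure lebesgue (ball (0::'a) R)"
  define A where "A = ennreal (2 * cS) * (1 + ennreal (2 powr (p + \<alpha>)) * T)"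
  define B where "B = (ennreal (2 * cS * 2 powr (p + \<alpha>) * Mphi powr p) * T + ennreal MW) * V"
  have "T < \<infinity>"
    unfolding T_def \<alpha>_def using assms by (intro nn_integral_norm_powr_outside_ball_finite) auto
  moreover have "V < \<infinity>"
    unfolding V_def using emeasure_bounded_finite[OF bounded_ball] by (simp add: less_top)
  ultimately have "A < \<infinity>" "B < \<infinity>"
    by (simp_all add: A_def B_def ennreal_mult_less_top)
  then obtain C where "0 < C" and C: "\<And>x. A * x + B \<le> ennreal C * (x + 1)"
    by (rule ennreal_affine_le_real_multiple) blast
  show ?thesis
  proof (intro exI[of _ C] conjI allI impI \<open>0 < C\<close>)
    fix F :: "real \<Rightarrow> 'a \<Rightarrow> real" and W :: "real \<Rightarrow> real" and \<phi> u :: "'a \<Rightarrow> real"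
    assume H: "admissible_F s p cS F \<and> admissible_W W \<and> Linfty_norm W = ereal MW \<and>
      \<phi> \<in> X_R s p R \<and> Linfty_norm \<phi> = ereal Mphi \<and> u \<in> W_R_phi s p R \<phi>"
    have "energy F W R u \<le> A * (Wsp_norm_pow s p u (ball 0 R) + bdry_pow s p R u \<phi>) + B"
      using energy_le[of s p cS F W MW \<phi> R Mphi u] H assms
      unfolding A_def B_def T_def V_def \<alpha>_def by simp
    also have "\<dots> \<le> ennreal C * (Wsp_norm_pow s p u (ball 0 R) + bdry_pow s p R u \<phi> + 1)"
      by (rule C)
    finally show "energy F W R u \<le> ennreal C * (Wsp_norm_pow s p u (ball 0 R) + bdry_pow s p R u \<phi> + 1)" .
    have "(\<lambda>(t, x). F t x) \<in> borel_measurable borel" "\<forall>t x. x \<noteq> 0 \<longrightarrow> F t x = F (-t) (-x)"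
      using H unfolding admissible_F_def by blast+
    with H show "K_R F R u = uAB F u (ball 0 R) (ball 0 R) + 2 * uAB F u (ball 0 R) (- ball 0 R)"
      by (intro K_R_eq_uAB borel_measurable_W_R_phi) blast+
  qed
qed

end
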